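(* For every positive integer $k$, $$\sum_{\mathbf{o}\in\mathcal{O}_k}P(\mathbf{o})=1,$$ i.e., $P$ is a probability measure on $\mathcal{O}_k$.
   Context: For a positive integer $k$, $\mathcal{O}_k$ is the set of all multisets $\mathbf{o}=\{o_1,\dots,o_r\}$ of odd positive integers with $\sum_{i=1}^r o_i=k$ (e.g. $\mathcal{O}_6=\{\{1,5\},\{3,3\},\{3,1,1,1\},\{1,1,1,1,1,1\}\}$). For $\mathbf{o}\in\mathcal{O}_k$ with $r$ elements, $c(\mathbf{o},i)$ denotes the number of times $i$ appears in $\mathbf{o}$, and $P(\mathbf{o})=\dfrac{2^{r-1}}{\prod_{i=1}^k i^{c(\mathbf{o},i)}\,c(\mathbf{o},i)!}$. *)

theory Defs
  imports "HOL-Analysis.Analysis" "HOL-Library.Multiset"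
begin

definition odd_parts :: "nat \<Rightarrow> nat multiset set" where
  "odd_parts k = {M. (\<forall>i\<in>#M. odd i \<and> 0 < i) \<and> sum_mset M = k}"

text \<open>The weight P(o), where r = size M and c(o,i) = count M i.\<close>
definition P_weight :: "nat \<Rightarrow> nat multiset \<Rightarrow> real" where
  "P_weight k M = 2 ^ (size M - 1) /
     (\<Prod>i\<in>{1..k}. real i ^ count M i * fact (count M i))"

end

theory Submission
  imports Defs
begin

text \<open>
  Write \<open>z(M) = \<Prod>j. j^c\<^sub>j c\<^sub>j!\<close> and let \<open>F(k)\<close> be the sum of \<open>x^|M| / z(M)\<close> over the
  partitions \<open>M\<close> of \<open>k\<close> with parts in a set \<open>S\<close>. Deleting one copy of a part \<open>i\<close>
  divides \<open>z(M)\<close> by \<open>i c\<^sub>i\<close>, so splitting \<open>k = \<Sum>i. i c\<^sub>i\<close> over the distinct parts of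
  each \<open>M\<close> yields \<open>k F(k) = x \<Sum>i\<in>S, i\<le>k. F(k - i)\<close>, the coefficient form of
  \<open>F' = x (\<Sum>i\<in>S. t^(i-1)) F\<close>. For odd parts and \<open>x = 2\<close> the generating function is
  \<open>(1 + t) / (1 - t)\<close>, i.e. \<open>F(k) = 2\<close> for \<open>k > 0\<close>; and \<open>P\<close> is half of the weight
  \<open>2^r / z\<close>.
\<close>

lemma sum_mset_image_mset_multiplicity:
  "sum_mset (image_mset f M) = (\<Sum>x\<in>set_mset M. of_nat (count M x) * f x)"
proof (induction M)
  case (add a M)
  have "(\<Sum>x\<in>set_mset M. of_nat (count (add_mset a M) x) * f x)
      = (\<Sum>x\<in>set_mset M. of_nat (count M x) * f x + (if a = x then f x else 0))"
    by (intro sum.cong) (auto simp: distrib_right add.commute)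
  also have "\<dots> = (\<Sum>x\<in>set_mset M. of_nat (count M x) * f x) + (if a \<in># M then f a else 0)"
    by (simp add: sum.distrib)
  finally show ?case
    using add by (cases "a \<in># M") (auto simp: insert_absorb not_in_iff add.commute)
qed simp

text \<open>The order of the centralizer in the symmetric group of a permutation of cycle type \<open>M\<close>.\<close>

definition centralizer_size :: "nat multiset \<Rightarrow> real" where
  "centralizer_size M = (\<Prod>j\<in>set_mset M. real j ^ count M j * fact (count M j))"

lemma centralizer_size_superset:
  assumes "finite A" "set_mset M \<subseteq> A"
  shows "(\<Prod>j\<in>A. real j ^ count M j * fact (count M j)) = centralizer_size M"
  unfolding centralizer_size_def
  by (rule prod.mono_neutral_right) (use assms in \<open>auto simp: not_in_iff\<close>)

lemma centralizer_size_remove: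
  assumes "i \<in># M"
  shows "centralizer_size M = real i * real (count M i) * centralizer_size (M - {#i#})"
proof -
  define f where "f N j = real j ^ count N j * fact (count N j)" for N j
  obtain c where c: "count M i = Suc c"
    using assms by (auto elim: in_countE)
  have "centralizer_size M = f M i * (\<Prod>j\<in>set_mset M - {i}. f M j)"
    using assms by (simp add: centralizer_size_def f_def prod.remove)
  moreover have "centralizer_size (M - {#i#}) = (\<Prod>j\<in>set_mset M. f (M - {#i#}) j)"
    using centralizer_size_superset[of "set_mset M" "M - {#i#}"] by (simp add: f_def subset_iff in_diffD)
  then have "centralizer_size (M - {#i#}) = f (M - {#i#}) i * (\<Prod>j\<in>set_mset M - {i}. f M j)"
    using assms by (auto simp: f_def prod.remove intro!: prod.cong)
  moreover have "f M i = real i * real (count M i) * f (M - {#i#}) i"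
    by (simp add: f_def c)
  ultimately show ?thesis
    by simp
qed

lemma member_le_sum_mset: "i \<in># M \<Longrightarrow> i \<le> sum_mset (M :: nat multiset)"
  by (metis le_add1 sum_mset.remove)

definition parts :: "nat set \<Rightarrow> nat \<Rightarrow> nat multiset set" where
  "parts S k = {M. set_mset M \<subseteq> S \<and> sum_mset M = k}"

lemma set_mset_parts_subset:
  assumes "0 \<notin> S" "M \<in> parts S k"
  shows "set_mset M \<subseteq> {1..k}"
  using assms member_le_sum_mset[of _ M] unfolding parts_def by (fastforce simp: Suc_le_eq intro: gr0I)

lemma size_le_sum_mset: "0 \<notin># M \<Longrightarrow> size M \<le> sum_mset (M :: nat multiset)"
  by (induction M) (auto simp: Suc_le_eq)

lemma finite_parts:
  assumes "0 \<notin> S"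
  shows "finite (parts S k)"
proof (rule finite_subset)
  show "parts S k \<subseteq> (\<Union>n\<le>k. multisets_of_size {1..k} n)"
  proof
    fix M assume M: "M \<in> parts S k"
    then have "size M \<le> k"
      using assms size_le_sum_mset[of M] by (auto simp: parts_def)
    then show "M \<in> (\<Union>n\<le>k. multisets_of_size {1..k} n)"
      using set_mset_parts_subset[OF assms M] by (auto simp: multisets_of_size_def)
  qed
qed blast

lemma sum_mset_times_weight:
  assumes "0 \<notin># M"
  shows "real (sum_mset M) * (x ^ size M / centralizer_size M)
       = x * (\<Sum>i\<in>set_mset M. x ^ size (M - {#i#}) / centralizer_size (M - {#i#}))"
proof -
  have "real i * real (count M i) * (x ^ size M / centralizer_size M)
      = x * (x ^ size (M - {#i#}) / centralizer_size (M - {#i#}))" if i: "i \<in># M" for i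
  proof -
    have "i \<noteq> 0" "count M i \<noteq> 0"
      using assms i by (metis, simp)
    moreover have "size M = Suc (size (M - {#i#}))"
      using i by (metis insert_DiffM size_add_mset)
    ultimately show ?thesis
      by (simp add: centralizer_size_remove[OF i] count_eq_zero_iff)
  qed
  moreover have "real (sum_mset M) = (\<Sum>i\<in>set_mset M. real i * real (count M i))"
    using sum_mset_image_mset_multiplicity[of real M] by (simp add: mult.commute)
  ultimately show ?thesis
    by (simp only: sum_distrib_left sum_distrib_right) (rule sum.cong, auto)
qed

definition parts_weight_sum :: "nat set \<Rightarrow> real \<Rightarrow> nat \<Rightarrow> real" where
  "parts_weight_sum S x k = (\<Sum>M\<in>parts S k. x ^ size M / centralizer_size M)"

lemma parts_remove_bij:
  assumes "i \<in> S" "i \<le> k"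
  shows "bij_betw (\<lambda>M. M - {#i#}) {M \<in> parts S k. i \<in># M} (parts S (k - i))"
proof (rule bij_betw_byWitness[where f' = "add_mset i"])
  show "(\<lambda>M. M - {#i#}) ` {M \<in> parts S k. i \<in># M} \<subseteq> parts S (k - i)"
    by (auto simp: parts_def sum_mset.remove dest: in_diffD)
  show "add_mset i ` parts S (k - i) \<subseteq> {M \<in> parts S k. i \<in># M}"
    using assms by (auto simp: parts_def)
qed auto

lemma parts_weight_sum_rec:
  assumes "0 \<notin> S"
  shows "real k * parts_weight_sum S x k
       = x * (\<Sum>i\<in>{i\<in>S. i \<le> k}. parts_weight_sum S x (k - i))"
proof -
  define w where "w M = x ^ size M / centralizer_size M" for M
  define T where "T = {i\<in>S. i \<le> k}"
  have "finite T"
    by (simp add: T_def)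
  have set_mset_parts: "set_mset M = {i\<in>T. i \<in># M}" if "M \<in> parts S k" for M
    using that member_le_sum_mset[of _ M] by (auto simp: parts_def T_def)
  have weight_step: "real k * w M = x * (\<Sum>i\<in>set_mset M. w (M - {#i#}))"
    if "M \<in> parts S k" for M
  proof -
    have "0 \<notin># M" "sum_mset M = k"
      using that assms by (auto simp: parts_def)
    then show ?thesis
      using sum_mset_times_weight[of M x] by (simp add: w_def)
  qed
  have "real k * parts_weight_sum S x k = (\<Sum>M\<in>parts S k. real k * w M)"
    by (simp add: parts_weight_sum_def sum_distrib_left w_def)
  also have "\<dots> = (\<Sum>M\<in>parts S k. x * (\<Sum>i\<in>set_mset M. w (M - {#i#})))"
    using weight_step by (rule sum.cong[OF refl])
  also have "\<dots> = x * (\<Sum>M\<in>parts S k. \<Sum>i\<in>{i\<in>T. i \<in># M}. w (M - {#i#}))"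
    unfolding sum_distrib_left by (intro sum.cong refl arg_cong2[where f = sum] set_mset_parts)
  also have "\<dots> = x * (\<Sum>i\<in>T. \<Sum>M\<in>{M\<in>parts S k. i \<in># M}. w (M - {#i#}))"
    using finite_parts[OF assms] \<open>finite T\<close> by (subst sum.swap_restrict) simp_all
  also have "\<dots> = x * (\<Sum>i\<in>T. parts_weight_sum S x (k - i))"
    unfolding parts_weight_sum_def w_def
    by (intro arg_cong2[where f = "(*)"] sum.cong refl sum.reindex_bij_betw parts_remove_bij)
       (auto simp: T_def)
  finally show ?thesis
    by (simp add: T_def)
qed

lemma parts_weight_sum_0:
  assumes "0 \<notin> S"
  shows "parts_weight_sum S x 0 = 1"
proof -
  have "parts S 0 = {{#}}"
    using assms by (auto simp: parts_def) (metis multiset_nonemptyE subsetD)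
  then show ?thesis
    by (simp add: parts_weight_sum_def centralizer_size_def)
qed

lemma card_odd_atMost: "card {i. odd i \<and> i \<le> k} = (k + 1) div 2"
proof -
  have "{i. odd i \<and> i \<le> k} = (\<lambda>j. 2 * j + 1) ` {..<(k + 1) div 2}"
    by (auto elim!: oddE)
  then show ?thesis
    by (simp add: card_image inj_on_def)
qed

lemma odd_parts_weight_sum: "parts_weight_sum {i. odd i} 2 k = (if k = 0 then 1 else 2)"
proof (induction k rule: less_induct)
  case (less k)
  define F where "F = parts_weight_sum {i. odd i} 2"
  show ?case
  proof (cases "k = 0")
    case True
    then show ?thesis
      by (simp add: parts_weight_sum_0)
  next
    case False
    let ?O = "{i. odd i \<and> i \<le> k}"
    have "(\<Sum>i\<in>?O. F (k - i)) = (\<Sum>i\<in>?O. 2 - (if i = k then 1 else 0))"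
      using less.IH by (intro sum.cong) (auto simp: F_def odd_pos)
    also have "\<dots> = 2 * real (card ?O) - (if odd k then 1 else 0)"
      by (simp add: sum_subtractf)
    also have "\<dots> = real k"
    proof -
      have "2 * card ?O = k + (if odd k then 1 else 0)"
        unfolding card_odd_atMost by presburger
      then show ?thesis
        by (simp split: if_splits)
    qed
    finally have "real k * F k = 2 * real k"
      using parts_weight_sum_rec[of "{i. odd i}" k 2] by (simp add: F_def)
    then show ?thesis
      using False by (simp add: F_def)
  qed
qed

lemma odd_parts_eq_parts: "odd_parts k = parts {i. odd i} k"
  by (auto simp: odd_parts_def parts_def odd_pos)

lemma P_weight_eq:
  assumes "M \<in> odd_parts k" "0 < k"
  shows "P_weight k M = 2 ^ size M / centralizer_size M / 2"
proof -
  have "set_mset M \<subseteq> {1..k}"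
    using assms set_mset_parts_subset[of "{i. odd i}"] by (simp add: odd_parts_eq_parts)
  moreover have "M \<noteq> {#}"
    using assms by (auto simp: odd_parts_def)
  then have "size M = Suc (size M - 1)"
    by (cases M) auto
  then have "(2::real) ^ size M = 2 * 2 ^ (size M - 1)"
    by (metis power_Suc)
  ultimately show ?thesis
    by (simp add: P_weight_def centralizer_size_superset)
qed

theorem lemmaA9:
  fixes k :: nat
  assumes "0 < k"
  shows "(\<Sum>M\<in>odd_parts k. P_weight k M) = 1"
proof -
  have "(\<Sum>M\<in>odd_parts k. P_weight k M) = parts_weight_sum {i. odd i} 2 k / 2"
    using assms by (simp add: P_weight_eq parts_weight_sum_def sum_divide_distrib odd_parts_eq_parts)
  then show ?thesis
    using assms by (simp add: odd_parts_weight_sum)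
qed

end
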